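(* Let $n$ be a natural number. The inclusion $\partial\boldsymbol\Delta^n\cup\Delta^n\hookrightarrow\boldsymbol\Delta^n$ is an expansion.
   Context: The thick simplex $\boldsymbol\Delta^n$ is the simplicial set whose $m$-simplices are all functions $\{0,\dots,m\}\to\{0,\dots,n\}$ (the nerve of the groupoid on $\{0,..,n\}$ with one morphism between any two objects); $\Delta^n\subset\boldsymbol\Delta^n$ is the simplicial subset of monotone functions, and the thick boundary $\partial\boldsymbol\Delta^n\subset\boldsymbol\Delta^n$ is the simplicial subset of functions that are not surjective (equivalently $\partial\Delta^n\times_\Delta\boldsymbol\Delta$). $\Lambda^p_i=\bigcup_{j\ne i}\partial_j\Delta^p$. An inclusion $S\hookrightarrow T$ is an expansion if there is a filtration $S=F_{-1}T\subset F_0T\subset\cdots$ with $T=\bigcup_\ell F_\ell T$, a weakly monotone sequence $n_\ell\ge1$, indices $0\le i_\ell\le n_\ell$, and maps $x_\ell:\Delta^{n_\ell}\to F_\ell T$, $y_\ell:\Lambda^{n_\ell}_{i_\ell}\to F_{\ell-1}T$ making $F_\ell T$ the pushout of $F_{\ell-1}T\leftarrow\Lambda^{n_\ell}_{i_\ell}\hookrightarrow\Delta^{n_\ell}$. *)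

theory Defs
  imports Main
begin

text \<open>An m-simplex of the thick simplex on vertices 0..N is a function {0..m} -> {0..N},
  represented as the list of its values (a nonempty list of length m+1).
  A simplicial operator theta : [k] -> [m] (monotone) is represented as a nonempty sorted
  list of length k+1 with entries at most m; it acts on simplices by precomposition.\<close>

definition simp_op :: "nat list \<Rightarrow> nat \<Rightarrow> bool" where
  "simp_op \<theta> m \<longleftrightarrow> \<theta> \<noteq> [] \<and> sorted \<theta> \<and> (\<forall>j\<in>set \<theta>. j \<le> m)"

definition act :: "nat list \<Rightarrow> nat list \<Rightarrow> nat list" where
  "act \<theta> \<sigma> = map (\<lambda>j. \<sigma> ! j) \<theta>"

definition simp_subset :: "nat list set \<Rightarrow> bool" where
  "simp_subset X \<longleftrightarrow> (\<forall>\<sigma>\<in>X. \<forall>\<theta>. simp_op \<theta> (length \<sigma> - 1) \<longrightarrow> act \<theta> \<sigma> \<in> X)"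

definition simp_map :: "nat list set \<Rightarrow> nat list set \<Rightarrow> (nat list \<Rightarrow> nat list) \<Rightarrow> bool" where
  "simp_map A B g \<longleftrightarrow> (\<forall>\<sigma>\<in>A. g \<sigma> \<in> B \<and> length (g \<sigma>) = length \<sigma> \<and>
      (\<forall>\<theta>. simp_op \<theta> (length \<sigma> - 1) \<longrightarrow> g (act \<theta> \<sigma>) = act \<theta> (g \<sigma>)))"

definition thick :: "nat \<Rightarrow> nat list set" where
  "thick N = {\<sigma>. \<sigma> \<noteq> [] \<and> set \<sigma> \<subseteq> {0..N}}"

definition std :: "nat \<Rightarrow> nat list set" where
  "std N = {\<sigma> \<in> thick N. sorted \<sigma>}"

definition thick_bd :: "nat \<Rightarrow> nat list set" where
  "thick_bd N = {\<sigma> \<in> thick N. \<not> {0..N} \<subseteq> set \<sigma>}"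

text \<open>Lambda^p_i = union over j /= i of the j-th face of Delta^p, i.e. monotone simplices
  missing some vertex j /= i.\<close>
definition horn :: "nat \<Rightarrow> nat \<Rightarrow> nat list set" where
  "horn p i = {\<sigma> \<in> std p. \<exists>j\<le>p. j \<noteq> i \<and> j \<notin> set \<sigma>}"

text \<open>Q (a simplicial subset containing P) is the pushout of P <- Lambda^p_i -> Delta^p
  along x : Delta^p -> Q restricting to Lambda^p_i -> P, with P -> Q the inclusion.
  Since pushouts of simplicial sets are computed degreewise, this means: Q is the union
  of P and the image of x, and x maps the simplices of Delta^p not in the horn injectively
  to simplices outside P.\<close>
definition pushout_step :: "nat list set \<Rightarrow> nat list set \<Rightarrow> nat \<Rightarrow> nat \<Rightarrow> (nat list \<Rightarrow> nat list) \<Rightarrow> bool" where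
  "pushout_step P Q p i x \<longleftrightarrow>
     simp_map (std p) Q x \<and> x ` horn p i \<subseteq> P \<and> P \<subseteq> Q \<and>
     Q = P \<union> x ` std p \<and> inj_on x (std p - horn p i) \<and>
     x ` (std p - horn p i) \<inter> P = {}"

text \<open>F 0 plays the role of F_{-1} T = S and F (Suc l) that of F_l T.
  The filtration may be finite or infinite: K is the (downward closed) set of indices at
  which a horn is attached; past K the filtration is constant.\<close>
definition expansion :: "nat list set \<Rightarrow> nat list set \<Rightarrow> bool" where
  "expansion S T \<longleftrightarrow> simp_subset S \<and> simp_subset T \<and> S \<subseteq> T \<and>
    (\<exists>F K n i x.
       F 0 = S \<and>
       (\<forall>l\<in>K. \<forall>l'<l. l' \<in> K) \<and>
       (\<forall>l\<in>K. 1 \<le> n l \<and> i l \<le> n l \<and> pushout_step (F l) (F (Suc l)) (n l) (i l) (x l)) \<and>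
       (\<forall>l. l \<notin> K \<longrightarrow> F (Suc l) = F l) \<and>
       (\<forall>l l'. l \<le> l' \<longrightarrow> l' \<in> K \<longrightarrow> n l \<le> n l') \<and>
       T = (\<Union>l. F l))"

end

theory Submission
  imports Defs "HOL-Library.Product_Lexorder" "HOL-Library.List_Lexorder"
begin

text \<open>A nondegenerate simplex of the thick simplex on [N] is a list without two equal
  adjacent entries; it lies outside \<open>\<partial>\<Delta>\<close> and \<open>\<Delta>\<close> iff it is surjective onto [N] and not sorted.
  The pivot k of such a list s is the first position that is not settled, where j is settled
  if s!j = j and the value j does not recur later.  If s!k = k, then k recurs after position
  k+1 and s is a top: deleting position k gives a face whose pivot is again k but whose k-th
  entry exceeds k.  Every other fresh simplex arises from exactly one top in this way, by
  inserting the value k at position k.  Each top t of dimension m is attached along the horn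
  \<open>\<Lambda>\<^sup>m\<^sub>k\<close>, its k-th face being the missing one.  If tops are attached by increasing dimension
  and, within a dimension, by decreasing pivot, every other face of t is already present: the
  face d_j t with j < k misses the value j, and for j > k the fresh part of d_j t is either of
  lower dimension or the missing face of a top of the same dimension with larger pivot.\<close>

section \<open>Simplicial operators\<close>

lemma length_act [simp]: "length (act \<theta> \<sigma>) = length \<theta>"
  by (simp add: act_def)

lemma nth_act [simp]: "i < length \<theta> \<Longrightarrow> act \<theta> \<sigma> ! i = \<sigma> ! (\<theta> ! i)"
  by (simp add: act_def)

lemma std_eq_simp_op: "std p = {\<theta>. simp_op \<theta> p}"
  by (auto simp: std_def thick_def simp_op_def)

lemma simp_op_less_length:
  "simp_op \<theta> (length \<sigma> - 1) \<Longrightarrow> \<sigma> \<noteq> [] \<Longrightarrow> j \<in> set \<theta> \<Longrightarrow> j < length \<sigma>"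
  by (cases \<sigma>) (auto simp: simp_op_def)

lemma act_act:
  assumes "simp_op \<theta> (length \<tau> - 1)" "\<tau> \<noteq> []"
  shows "act \<theta> (act \<tau> \<sigma>) = act (act \<theta> \<tau>) \<sigma>"
  using simp_op_less_length[OF assms] by (auto simp: act_def)

lemma set_act_subset:
  "simp_op \<theta> (length \<sigma> - 1) \<Longrightarrow> \<sigma> \<noteq> [] \<Longrightarrow> set (act \<theta> \<sigma>) \<subseteq> set \<sigma>"
  using simp_op_less_length by (fastforce simp: act_def)

lemma sorted_act:
  assumes "simp_op \<theta> (length \<sigma> - 1)" "\<sigma> \<noteq> []" "sorted \<sigma>"
  shows "sorted (act \<theta> \<sigma>)"
proof -
  have "sorted_wrt (\<lambda>i j. \<sigma> ! i \<le> \<sigma> ! j) \<theta>"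
    using assms(1) simp_op_less_length[OF assms(1,2)]
    by (auto simp: simp_op_def sorted_nth_mono[OF assms(3)] intro: sorted_wrt_mono_rel[of _ "(\<le>)"])
  then show ?thesis
    by (simp add: act_def sorted_map)
qed

lemma simp_op_act:
  assumes "simp_op \<tau> m" "simp_op \<theta> (length \<tau> - 1)"
  shows "simp_op (act \<theta> \<tau>) m"
proof -
  have "\<tau> \<noteq> []" "sorted \<tau>"
    using assms(1) by (auto simp: simp_op_def)
  moreover have "act \<theta> \<tau> \<noteq> []"
    using assms(2) by (simp add: simp_op_def act_def)
  ultimately show ?thesis
    using assms sorted_act[OF assms(2)] set_act_subset[OF assms(2)] by (auto simp: simp_op_def)
qed

lemma simp_op_upt: "0 < m \<Longrightarrow> simp_op [0..<m] (m - 1)"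
  by (auto simp: simp_op_def)

lemma simp_op_filter_upt:
  assumes "1 < m"
  shows "simp_op (filter (\<lambda>i. i \<noteq> j) [0..<m]) (m - 1)"
proof -
  have "(if j = 0 then 1 else 0) \<in> set (filter (\<lambda>i. i \<noteq> j) [0..<m])"
    using assms by auto
  then have "filter (\<lambda>i. i \<noteq> j) [0..<m] \<noteq> []"
    by (metis empty_iff list.set(1))
  then show ?thesis
    by (auto simp: simp_op_def sorted_wrt_filter)
qed

lemma act_in_thick: "\<sigma> \<in> thick N \<Longrightarrow> simp_op \<theta> (length \<sigma> - 1) \<Longrightarrow> act \<theta> \<sigma> \<in> thick N"
proof -
  assume "\<sigma> \<in> thick N" and \<theta>: "simp_op \<theta> (length \<sigma> - 1)"
  then have "\<sigma> \<noteq> []" "set \<sigma> \<subseteq> {0..N}" "\<theta> \<noteq> []"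
    by (auto simp: thick_def simp_op_def)
  then show ?thesis
    using set_act_subset[OF \<theta>] by (auto simp: thick_def act_def)
qed

lemma simp_subset_thick: "simp_subset (thick N)"
  by (simp add: simp_subset_def act_in_thick)

lemma thick_iff_nth: "s \<in> thick N \<longleftrightarrow> s \<noteq> [] \<and> (\<forall>i<length s. s ! i \<le> N)"
  unfolding thick_def by (force simp: in_set_conv_nth)

lemma mem_horn_iff: "\<tau> \<in> horn p k \<longleftrightarrow> simp_op \<tau> p \<and> (\<exists>j\<le>p. j \<noteq> k \<and> j \<notin> set \<tau>)"
  by (simp add: horn_def std_eq_simp_op)

definition base :: "nat \<Rightarrow> nat list set" where
  "base N = thick_bd N \<union> std N"

lemma mem_base_iff: "\<sigma> \<in> base N \<longleftrightarrow> \<sigma> \<in> thick N \<and> (\<not> {0..N} \<subseteq> set \<sigma> \<or> sorted \<sigma>)"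
  by (auto simp: base_def thick_bd_def std_def)

lemma base_subset_thick: "base N \<subseteq> thick N"
  by (auto simp: mem_base_iff)

lemma simp_subset_base: "simp_subset (base N)"
  unfolding simp_subset_def
proof (intro ballI allI impI)
  fix \<sigma> \<theta> assume \<sigma>: "\<sigma> \<in> base N" and \<theta>: "simp_op \<theta> (length \<sigma> - 1)"
  then have "\<sigma> \<noteq> []" "\<sigma> \<in> thick N"
    by (auto simp: mem_base_iff thick_def)
  then have "act \<theta> \<sigma> \<in> thick N" "set (act \<theta> \<sigma>) \<subseteq> set \<sigma>"
    "sorted \<sigma> \<Longrightarrow> sorted (act \<theta> \<sigma>)"
    using \<theta> act_in_thick set_act_subset sorted_act by auto
  with \<sigma> show "act \<theta> \<sigma> \<in> base N"
    unfolding mem_base_iff by blast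
qed

section \<open>Degeneracies and faces of lists\<close>

lemma remdups_adj_Cons_cong:
  "remdups_adj xs = remdups_adj ys \<Longrightarrow> remdups_adj (x # xs) = remdups_adj (x # ys)"
  by (simp add: remdups_adj_Cons)

lemma remdups_adj_map_remdups_adj:
  "remdups_adj (map f (remdups_adj xs)) = remdups_adj (map f xs)"
proof (induction xs rule: remdups_adj.induct)
  case (3 x y xs)
  show ?case
  proof (cases "x = y")
    case True
    with "3.IH"(1) show ?thesis
      by simp
  next
    case False
    then have "remdups_adj (map f (remdups_adj (x # y # xs)))
        = remdups_adj (f x # map f (remdups_adj (y # xs)))"
      by simp
    also have "\<dots> = remdups_adj (f x # map f (y # xs))"
      by (rule remdups_adj_Cons_cong[OF "3.IH"(2)[OF False]])
    finally show ?thesis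
      by simp
  qed
qed simp_all

lemma sorted_remdups_adj_iff: "sorted (remdups_adj xs) \<longleftrightarrow> sorted xs"
  by (induction xs rule: remdups_adj.induct) auto

lemma distinct_remdups_adj_sorted: "sorted xs \<Longrightarrow> distinct (remdups_adj xs)"
  by (induction xs rule: remdups_adj.induct) auto

lemma remdups_adj_sorted_eq:
  "sorted xs \<Longrightarrow> sorted ys \<Longrightarrow> distinct ys \<Longrightarrow> set xs = set ys \<Longrightarrow> remdups_adj xs = ys"
  by (simp add: distinct_remdups_adj_sorted sorted_distinct_set_unique)

lemma remdups_adj_sorted_upt:
  "sorted \<tau> \<Longrightarrow> set \<tau> = {0..<m} \<Longrightarrow> remdups_adj \<tau> = [0..<m]"
  by (simp add: remdups_adj_sorted_eq)

lemma remdups_adj_sorted_filter_upt: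
  assumes "sorted \<tau>" "set \<tau> = {0..<m} - {j}"
  shows "remdups_adj \<tau> = filter (\<lambda>i. i \<noteq> j) [0..<m]"
proof (rule remdups_adj_sorted_eq[OF assms(1)])
  show "sorted (filter (\<lambda>i. i \<noteq> j) [0..<m])"
    using sorted_wrt_filter[OF sorted_upt] .
  show "set \<tau> = set (filter (\<lambda>i. i \<noteq> j) [0..<m])"
    unfolding assms(2) by auto
qed simp

lemma simp_op_Cons_zero: "simp_op \<theta> m \<Longrightarrow> simp_op (0 # \<theta>) m"
  by (simp add: simp_op_def)

lemma simp_op_Cons_zero_Suc: "simp_op \<theta> m \<Longrightarrow> simp_op (0 # map Suc \<theta>) (Suc m)"
  by (simp add: simp_op_def sorted_map)

lemma remdups_adj_degeneracy:
  "xs \<noteq> [] \<Longrightarrow> \<exists>\<theta>. simp_op \<theta> (length (remdups_adj xs) - 1) \<and> act \<theta> (remdups_adj xs) = xs"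
proof (induction xs rule: remdups_adj.induct)
  case (2 x)
  show ?case
    by (rule exI[of _ "[0]"]) (simp add: simp_op_def act_def)
next
  case (3 x y xs)
  show ?case
  proof (cases "x = y")
    case True
    with 3 obtain \<theta> where \<theta>: "simp_op \<theta> (length (remdups_adj (x # xs)) - 1)"
      "act \<theta> (remdups_adj (x # xs)) = x # xs"
      by auto
    have "remdups_adj (x # xs) ! 0 = x"
      using hd_remdups_adj[of "x # xs"] by (simp add: hd_conv_nth[symmetric])
    with \<theta> True show ?thesis
      by (intro exI[of _ "0 # \<theta>"]) (simp add: simp_op_Cons_zero act_def)
  next
    case False
    with 3 obtain \<theta> where \<theta>: "simp_op \<theta> (length (remdups_adj (y # xs)) - 1)"
      "act \<theta> (remdups_adj (y # xs)) = y # xs"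
      by auto
    have "remdups_adj (y # xs) \<noteq> []"
      by simp
    then have "simp_op (0 # map Suc \<theta>) (length (x # remdups_adj (y # xs)) - 1)"
      using simp_op_Cons_zero_Suc[OF \<theta>(1)] by (cases "remdups_adj (y # xs)") auto
    moreover have "act (0 # map Suc \<theta>) (x # remdups_adj (y # xs)) = x # y # xs"
      using \<theta>(2) by (simp add: act_def comp_def)
    ultimately show ?thesis
      using False by auto
  qed
qed simp

lemma remdups_adj_act: "remdups_adj (act \<tau> \<sigma>) = remdups_adj (act (remdups_adj \<tau>) \<sigma>)"
  by (simp add: act_def remdups_adj_map_remdups_adj)

lemma remdups_adj_in_base_iff [simp]: "remdups_adj \<sigma> \<in> base N \<longleftrightarrow> \<sigma> \<in> base N"
  by (simp add: mem_base_iff thick_def sorted_remdups_adj_iff)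

definition remove_nth :: "nat \<Rightarrow> 'a list \<Rightarrow> 'a list" where
  "remove_nth j xs = take j xs @ drop (Suc j) xs"

definition insert_nth :: "nat \<Rightarrow> 'a \<Rightarrow> 'a list \<Rightarrow> 'a list" where
  "insert_nth j x xs = take j xs @ x # drop j xs"

lemma length_remove_nth [simp]: "j < length xs \<Longrightarrow> length (remove_nth j xs) = length xs - 1"
  by (simp add: remove_nth_def)

lemma nth_remove_nth:
  "j < length xs \<Longrightarrow> i < length xs - 1 \<Longrightarrow>
    remove_nth j xs ! i = (if i < j then xs ! i else xs ! Suc i)"
  by (auto simp: remove_nth_def nth_append min_def)

lemma length_insert_nth [simp]: "j \<le> length xs \<Longrightarrow> length (insert_nth j x xs) = Suc (length xs)"
  by (simp add: insert_nth_def)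

lemma nth_insert_nth:
  "j \<le> length xs \<Longrightarrow> i \<le> length xs \<Longrightarrow>
    insert_nth j x xs ! i = (if i < j then xs ! i else if i = j then x else xs ! (i - 1))"
  by (auto simp: insert_nth_def nth_append min_def nth_Cons')

lemma remove_nth_insert_nth [simp]: "j \<le> length xs \<Longrightarrow> remove_nth j (insert_nth j x xs) = xs"
  by (simp add: remove_nth_def insert_nth_def)

lemma insert_nth_remove_nth: "j < length xs \<Longrightarrow> insert_nth j (xs ! j) (remove_nth j xs) = xs"
  by (simp add: remove_nth_def insert_nth_def id_take_nth_drop[symmetric])

lemma set_insert_nth: "set (insert_nth j x xs) = insert x (set xs)"
  by (metis insert_nth_def append_take_drop_id set_append list.set(2) Un_insert_right)

lemma set_remove_nth_subset: "set (remove_nth j xs) \<subseteq> set xs"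
  by (auto simp: remove_nth_def dest: in_set_takeD in_set_dropD)

lemma sorted_remove_nth:
  assumes "sorted xs"
  shows "sorted (remove_nth j xs)"
proof -
  have "\<forall>x\<in>set (take j xs). \<forall>y\<in>set (drop j xs). x \<le> y"
    using assms sorted_append[of "take j xs" "drop j xs"] by simp
  moreover have "set (drop (Suc j) xs) \<subseteq> set (drop j xs)"
    by (simp add: set_drop_subset_set_drop)
  ultimately show ?thesis
    using assms by (auto simp: remove_nth_def sorted_append)
qed

lemma map_nth_filter_upt:
  assumes "j < length xs"
  shows "map ((!) xs) (filter (\<lambda>i. i \<noteq> j) [0..<length xs]) = remove_nth j xs"
proof -
  have "[0..<length xs] = [0..<j] @ j # [Suc j..<length xs]"
    using assms by (metis le_add1 less_imp_le_nat upt_add_eq_append upt_conv_Cons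
        add_0 le_add_diff_inverse)
  then have "filter (\<lambda>i. i \<noteq> j) [0..<length xs] = [0..<j] @ [Suc j..<length xs]"
    by simp
  moreover have "map ((!) xs) [0..<j] = take j xs" "map ((!) xs) [Suc j..<length xs] = drop (Suc j) xs"
    using assms by (auto intro: nth_equalityI)
  ultimately show ?thesis
    by (simp add: remove_nth_def)
qed

lemma act_upt_length: "act [0..<length t] t = t"
  by (simp add: act_def map_nth)

lemma act_filter_upt_length:
  "j < length t \<Longrightarrow> act (filter (\<lambda>i. i \<noteq> j) [0..<length t]) t = remove_nth j t"
  by (simp add: act_def map_nth_filter_upt)

section \<open>Pivots and tops\<close>

definition settled :: "nat list \<Rightarrow> nat \<Rightarrow> bool" where
  "settled s j \<longleftrightarrow> j < length s \<and> s ! j = j \<and> (\<forall>i. j < i \<and> i < length s \<longrightarrow> s ! i \<noteq> j)"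

definition pivot :: "nat list \<Rightarrow> nat" where
  "pivot s = (LEAST k. \<not> settled s k)"

definition pivot_fixed :: "nat list \<Rightarrow> bool" where
  "pivot_fixed s \<longleftrightarrow> pivot s < length s \<and> s ! pivot s = pivot s"

lemma settled_below_pivot: "j < pivot s \<Longrightarrow> settled s j"
  unfolding pivot_def using not_less_Least by blast

lemma not_settled_pivot: "\<not> settled s (pivot s)"
proof -
  have "\<not> settled s (length s)"
    by (simp add: settled_def)
  then show ?thesis
    unfolding pivot_def by (rule LeastI)
qed

lemma pivot_geI: "(\<And>j. j < k \<Longrightarrow> settled s j) \<Longrightarrow> k \<le> pivot s"
  using not_settled_pivot not_less by blast

lemma pivot_eqI: "(\<And>j. j < k \<Longrightarrow> settled s j) \<Longrightarrow> \<not> settled s k \<Longrightarrow> pivot s = k"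
  using pivot_geI settled_below_pivot le_neq_implies_less by blast

lemma nth_below_pivot: "j < pivot s \<Longrightarrow> s ! j = j"
  using settled_below_pivot by (simp add: settled_def)

lemma nth_after_below_pivot: "j < pivot s \<Longrightarrow> j < i \<Longrightarrow> i < length s \<Longrightarrow> s ! i \<noteq> j"
  using settled_below_pivot by (simp add: settled_def)

text \<open>In the nerve of an indiscrete groupoid a simplex is degenerate iff two adjacent
  vertices coincide.\<close>

definition fresh :: "nat \<Rightarrow> nat list set" where
  "fresh N = {s \<in> thick N. s \<notin> base N \<and> distinct_adj s}"

definition tops :: "nat \<Rightarrow> nat list set" where
  "tops N = {t \<in> fresh N. pivot_fixed t}"

lemma mem_fresh_iff:
  "s \<in> fresh N \<longleftrightarrow> s \<in> thick N \<and> {0..N} \<subseteq> set s \<and> \<not> sorted s \<and> distinct_adj s"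
  by (auto simp: fresh_def mem_base_iff)

lemma remdups_adj_in_fresh: "\<sigma> \<in> thick N \<Longrightarrow> \<sigma> \<notin> base N \<Longrightarrow> remdups_adj \<sigma> \<in> fresh N"
  by (simp add: fresh_def thick_def)

lemma pivot_less_length:
  assumes "s \<in> fresh N"
  shows "pivot s < length s"
proof (rule ccontr)
  assume "\<not> pivot s < length s"
  then have "s ! i = i" if "i < length s" for i
    using that nth_below_pivot by simp
  then have "sorted s"
    by (simp add: sorted_iff_nth_mono)
  with assms show False
    by (simp add: mem_fresh_iff)
qed

lemma top_pivot_recurs:
  assumes "t \<in> tops N"
  obtains q where "Suc (pivot t) < q" "q < length t" "t ! q = pivot t"
proof -
  let ?k = "pivot t"
  have fixed: "?k < length t" "t ! ?k = ?k" and "distinct_adj t"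
    using assms by (auto simp: tops_def pivot_fixed_def mem_fresh_iff)
  with not_settled_pivot[of t] obtain q where q: "?k < q" "q < length t" "t ! q = ?k"
    by (auto simp: settled_def)
  moreover have "q \<noteq> Suc ?k"
    using q fixed distinct_adj_nth[OF \<open>distinct_adj t\<close>, of ?k] by auto
  ultimately show ?thesis
    by (intro that[of q]) auto
qed

lemma top_pivot_less_next:
  assumes "t \<in> tops N"
  shows "Suc (pivot t) < length t" "pivot t < t ! Suc (pivot t)"
proof -
  let ?k = "pivot t"
  show len: "Suc ?k < length t"
    using top_pivot_recurs[OF assms] by (metis Suc_lessD less_trans_Suc)
  have "t ! ?k = ?k" "distinct_adj t"
    using assms by (auto simp: tops_def pivot_fixed_def mem_fresh_iff)
  then have "t ! Suc ?k \<noteq> ?k"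
    using distinct_adj_nth len by fastforce
  moreover have "t ! Suc ?k \<noteq> j" if "j < ?k" for j
    using nth_after_below_pivot[OF that _ len] that by simp
  ultimately show "?k < t ! Suc ?k"
    by (metis linorder_neqE_nat)
qed

lemma top_pivot_less:
  assumes "t \<in> tops N"
  shows "pivot t < N"
proof -
  have "t \<in> thick N"
    using assms by (simp add: tops_def fresh_def)
  then show ?thesis
    using top_pivot_less_next[OF assms] thick_iff_nth by (meson order_less_le_trans)
qed

lemma bottom_pivot_less_nth:
  assumes "b \<in> fresh N" "\<not> pivot_fixed b"
  shows "pivot b < b ! pivot b"
proof -
  let ?k = "pivot b"
  have len: "?k < length b"
    using pivot_less_length[OF assms(1)] .
  then have "b ! ?k \<noteq> ?k"
    using assms(2) by (simp add: pivot_fixed_def)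
  moreover have "b ! ?k \<noteq> j" if "j < ?k" for j
    using nth_after_below_pivot[OF that that len] .
  ultimately show ?thesis
    by (metis linorder_neqE_nat)
qed

lemma bottom_pivot_less:
  assumes "b \<in> fresh N" "\<not> pivot_fixed b"
  shows "pivot b < N"
  using assms bottom_pivot_less_nth pivot_less_length
  by (meson mem_fresh_iff order_less_le_trans thick_iff_nth)

lemma bottom_pivot_recurs:
  assumes "b \<in> fresh N" "\<not> pivot_fixed b"
  obtains q where "pivot b < q" "q < length b" "b ! q = pivot b"
proof -
  let ?k = "pivot b"
  have "?k \<in> set b"
    using assms bottom_pivot_less[OF assms] by (auto simp: mem_fresh_iff)
  then obtain q where q: "q < length b" "b ! q = ?k"
    by (auto simp: in_set_conv_nth)
  moreover have "\<not> q < ?k" "q \<noteq> ?k"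
    using q nth_below_pivot[of q b] assms(2) by (auto simp: pivot_fixed_def)
  ultimately show ?thesis
    by (intro that[of q]) auto
qed

lemma pivot_insert_bottom:
  assumes "b \<in> fresh N" "\<not> pivot_fixed b"
  shows "pivot (insert_nth (pivot b) (pivot b) b) = pivot b"
proof -
  let ?k = "pivot b" and ?c = "insert_nth (pivot b) (pivot b) b"
  have len: "?k < length b"
    using pivot_less_length[OF assms(1)] .
  have nth_c: "?c ! i = (if i < ?k then b ! i else if i = ?k then ?k else b ! (i - 1))"
    if "i < length ?c" for i
    using that len by (simp add: nth_insert_nth)
  show ?thesis
  proof (rule pivot_eqI)
    fix j assume j: "j < ?k"
    have "?c ! i \<noteq> j" if "j < i" "i < length ?c" for i
      using that j len nth_c[OF that(2)] nth_after_below_pivot[OF j, of i]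
        nth_after_below_pivot[OF j, of "i - 1"]
      by (cases i "?k" rule: linorder_cases) auto
    with j len nth_c[of j] nth_below_pivot[OF j] show "settled ?c j"
      by (simp add: settled_def)
  next
    obtain q where q: "?k < q" "q < length b" "b ! q = ?k"
      using bottom_pivot_recurs[OF assms] .
    then have "?c ! Suc q = ?k" "?k < Suc q" "Suc q < length ?c"
      using nth_c[of "Suc q"] len by simp_all
    then show "\<not> settled ?c ?k"
      unfolding settled_def by blast
  qed
qed

lemma insert_bottom_in_tops:
  assumes "b \<in> fresh N" "\<not> pivot_fixed b"
  shows "insert_nth (pivot b) (pivot b) b \<in> tops N"
proof -
  let ?k = "pivot b" and ?c = "insert_nth (pivot b) (pivot b) b"
  have len: "?k < length b"
    using pivot_less_length[OF assms(1)] .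
  have b: "b \<in> thick N" "{0..N} \<subseteq> set b" "\<not> sorted b" "distinct_adj b"
    using assms(1) by (simp_all add: mem_fresh_iff)
  have nth_c: "?c ! i = (if i < ?k then b ! i else if i = ?k then ?k else b ! (i - 1))"
    if "i < length ?c" for i
    using that len by (simp add: nth_insert_nth)
  have "?c \<noteq> []"
    by (simp add: insert_nth_def)
  then have "?c \<in> thick N"
    using b(1) bottom_pivot_less[OF assms] by (auto simp: thick_def set_insert_nth)
  moreover have "{0..N} \<subseteq> set ?c"
    using b(2) by (auto simp: set_insert_nth)
  moreover have "\<not> sorted ?c"
    using b(3) sorted_remove_nth[of ?c ?k] len by auto
  moreover have "?c ! i \<noteq> ?c ! Suc i" if i: "Suc i < length ?c" for i
  proof -
    consider "Suc i < ?k" | "Suc i = ?k" | "i = ?k" | "?k < i"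
      by linarith
    then show ?thesis
    proof cases
      case 1
      then show ?thesis
        using nth_c i len distinct_adj_nth[OF b(4), of i] by simp
    next
      case 2
      then show ?thesis
        using nth_c i nth_below_pivot[of i b] by simp
    next
      case 3
      then show ?thesis
        using nth_c i bottom_pivot_less_nth[OF assms] by simp
    next
      case 4
      then show ?thesis
        using nth_c i len distinct_adj_nth[OF b(4), of "i - 1"] by simp
    qed
  qed
  moreover have "pivot_fixed ?c"
    using pivot_insert_bottom[OF assms] nth_c[of ?k] len by (simp add: pivot_fixed_def)
  ultimately show ?thesis
    by (simp add: tops_def mem_fresh_iff distinct_adj_conv_nth)
qed

lemma remove_top_pivot:
  assumes "t \<in> tops N"
  shows "pivot (remove_nth (pivot t) t) = pivot t" "\<not> pivot_fixed (remove_nth (pivot t) t)"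
proof -
  let ?k = "pivot t" and ?d = "remove_nth (pivot t) t"
  have len: "Suc ?k < length t" and next_gt: "?k < t ! Suc ?k"
    using top_pivot_less_next[OF assms] .
  have nth_d: "?d ! i = (if i < ?k then t ! i else t ! Suc i)" if "i < length ?d" for i
    using that len by (simp add: nth_remove_nth)
  have "?d ! ?k \<noteq> ?k"
    using nth_d[of ?k] len next_gt by simp
  moreover have "pivot ?d = ?k"
  proof (rule pivot_eqI)
    fix j assume j: "j < ?k"
    have "?d ! i \<noteq> j" if "j < i" "i < length ?d" for i
      using that j len nth_d[OF that(2)] nth_after_below_pivot[OF j, of i]
        nth_after_below_pivot[OF j, of "Suc i"]
      by auto
    with j len nth_d[of j] nth_below_pivot[OF j] show "settled ?d j"
      by (simp add: settled_def)
  next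
    show "\<not> settled ?d ?k"
      using \<open>?d ! ?k \<noteq> ?k\<close> by (simp add: settled_def)
  qed
  ultimately show "pivot ?d = ?k" "\<not> pivot_fixed ?d"
    by (simp_all add: pivot_fixed_def)
qed

lemma remove_top_in_fresh:
  assumes "t \<in> tops N"
  shows "remove_nth (pivot t) t \<in> fresh N"
proof -
  let ?k = "pivot t" and ?d = "remove_nth (pivot t) t"
  have len: "Suc ?k < length t" and next_gt: "?k < t ! Suc ?k"
    using top_pivot_less_next[OF assms] .
  have t: "t \<in> thick N" "{0..N} \<subseteq> set t" "distinct_adj t" "t ! ?k = ?k"
    using assms by (simp_all add: tops_def mem_fresh_iff pivot_fixed_def)
  have nth_d: "?d ! i = (if i < ?k then t ! i else t ! Suc i)" if "i < length ?d" for i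
    using that len by (simp add: nth_remove_nth)
  obtain q where q: "Suc ?k < q" "q < length t" "t ! q = ?k"
    using top_pivot_recurs[OF assms] .
  have q_d: "q - 1 < length ?d" "?k < q - 1"
    using q len by simp_all
  then have d_q: "?d ! (q - 1) = ?k"
    using nth_d[of "q - 1"] q by simp
  have "?d \<in> thick N"
    using t(1) set_remove_nth_subset[of ?k t] len by (auto simp: thick_def remove_nth_def)
  moreover have "{0..N} \<subseteq> set ?d"
  proof -
    have "set t = insert ?k (set ?d)"
      using set_insert_nth insert_nth_remove_nth[of ?k t] len t(4) by (metis Suc_lessD)
    moreover have "?k \<in> set ?d"
      using nth_mem[OF q_d(1)] d_q by simp
    ultimately have "set t = set ?d"
      by (simp add: insert_absorb)
    with t(2) show ?thesis
      by simp
  qed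
  moreover have "\<not> sorted ?d"
  proof
    assume "sorted ?d"
    then have "?d ! ?k \<le> ?d ! (q - 1)"
      using q_d by (simp add: sorted_iff_nth_mono)
    then show False
      using nth_d[of ?k] d_q len next_gt by simp
  qed
  moreover have "?d ! i \<noteq> ?d ! Suc i" if i: "Suc i < length ?d" for i
  proof -
    consider "Suc i < ?k" | "Suc i = ?k" | "?k \<le> i"
      by linarith
    then show ?thesis
    proof cases
      case 1
      then show ?thesis
        using nth_d i len distinct_adj_nth[OF t(3), of i] by simp
    next
      case 2
      then show ?thesis
        using nth_d i nth_below_pivot[of i t] next_gt by simp
    next
      case 3
      then show ?thesis
        using nth_d i len distinct_adj_nth[OF t(3), of "Suc i"] by simp
    qed
  qed
  ultimately show ?thesis
    by (simp add: mem_fresh_iff distinct_adj_conv_nth)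
qed

definition top_of :: "nat list \<Rightarrow> nat list" where
  "top_of b = (if pivot_fixed b then b else insert_nth (pivot b) (pivot b) b)"

lemma top_of_in_tops: "b \<in> fresh N \<Longrightarrow> top_of b \<in> tops N"
  using insert_bottom_in_tops by (simp add: top_of_def tops_def)

lemma length_top_of_le: "b \<in> fresh N \<Longrightarrow> length (top_of b) \<le> Suc (length b)"
  using pivot_less_length[of b N] by (simp add: top_of_def)

lemma top_of_top: "t \<in> tops N \<Longrightarrow> top_of t = t"
  by (simp add: top_of_def tops_def)

lemma top_of_remove_top: "t \<in> tops N \<Longrightarrow> top_of (remove_nth (pivot t) t) = t"
  using remove_top_pivot[of t N] insert_nth_remove_nth[of "pivot t" t] top_pivot_less_next(1)[of t N]
  by (simp add: top_of_def tops_def pivot_fixed_def)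

lemma top_of_eqD:
  assumes "b \<in> fresh N" "top_of b = t"
  shows "b = t \<or> b = remove_nth (pivot t) t"
  using assms pivot_insert_bottom[OF assms(1)] pivot_less_length[OF assms(1)]
  by (cases "pivot_fixed b") (auto simp: top_of_def)

section \<open>Faces of a top\<close>

text \<open>Tops are attached by increasing dimension and, within one dimension, by decreasing
  pivot; the last component only breaks ties.\<close>

definition top_key :: "nat \<Rightarrow> nat list \<Rightarrow> nat \<times> nat \<times> nat list" where
  "top_key N t = (length t, N - pivot t, t)"

lemma notin_remove_nth_below_pivot:
  assumes "j < pivot s"
  shows "j \<notin> set (remove_nth j s)"
proof
  assume "j \<in> set (remove_nth j s)"
  then obtain i where i: "i < length (remove_nth j s)" "remove_nth j s ! i = j"
    by (auto simp: in_set_conv_nth)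
  have "j < length s"
    using settled_below_pivot[OF assms] by (simp add: settled_def)
  show False
  proof (cases "i < j")
    case True
    then show False
      using i \<open>j < length s\<close> nth_below_pivot[of i s] assms by (simp add: nth_remove_nth)
  next
    case False
    then have "s ! Suc i = j" "j < Suc i" "Suc i < length s"
      using i \<open>j < length s\<close> by (simp_all add: nth_remove_nth)
    then show False
      using nth_after_below_pivot[OF assms] by blast
  qed
qed

lemma pivot_remove_nth_ge:
  assumes "pivot s < j" "j < length s"
  shows "pivot s \<le> pivot (remove_nth j s)"
proof (rule pivot_geI)
  fix i assume i: "i < pivot s"
  have "remove_nth j s ! i' \<noteq> i" if "i < i'" "i' < length s - 1" for i'
    using that assms nth_after_below_pivot[OF i, of i'] nth_after_below_pivot[OF i, of "Suc i'"]
    by (simp add: nth_remove_nth)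
  then show "settled (remove_nth j s) i"
    using assms i nth_below_pivot[OF i] by (simp add: settled_def nth_remove_nth)
qed

lemma top_key_face_less:
  assumes t: "t \<in> tops N" and j: "j < length t" "j \<noteq> pivot t"
    and fresh: "remove_nth j t \<in> fresh N"
  shows "top_key N (top_of (remove_nth j t)) < top_key N t"
proof -
  let ?k = "pivot t" and ?b = "remove_nth j t"
  have "\<not> j < ?k"
  proof
    assume "j < ?k"
    then have "j \<notin> set ?b" "j \<le> N"
      using notin_remove_nth_below_pivot top_pivot_less[OF t] by auto
    with fresh show False
      by (auto simp: mem_fresh_iff)
  qed
  with j have "?k < j"
    by simp
  show ?thesis
  proof (cases "pivot_fixed ?b")
    case True
    then show ?thesis
      using j by (auto simp: top_key_def top_of_def)
  next
    case False
    have "?k \<le> pivot ?b"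
      using pivot_remove_nth_ge[OF \<open>?k < j\<close> j(1)] .
    moreover have "pivot ?b \<noteq> ?k"
    proof
      assume "pivot ?b = ?k"
      moreover have "?b ! ?k = ?k" "?k < length ?b"
        using \<open>?k < j\<close> j t by (simp_all add: nth_remove_nth tops_def pivot_fixed_def)
      ultimately show False
        using False by (simp add: pivot_fixed_def)
    qed
    moreover have "pivot ?b < N"
      using bottom_pivot_less[OF fresh False] .
    ultimately have "N - pivot ?b < N - ?k"
      by linarith
    moreover have "length (top_of ?b) = length t" "pivot (top_of ?b) = pivot ?b"
      using j pivot_less_length[OF fresh] pivot_insert_bottom[OF fresh False] False
      by (simp_all add: top_of_def)
    ultimately show ?thesis
      by (simp add: top_key_def)
  qed
qed

lemma top_key_horn_less:
  assumes t: "t \<in> tops N" and \<tau>: "simp_op \<tau> (length t - 1)"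
    and j: "j < length t" "j \<noteq> pivot t" "j \<notin> set \<tau>" and not_base: "act \<tau> t \<notin> base N"
  shows "top_key N (top_of (remdups_adj (act \<tau> t))) < top_key N t"
proof -
  let ?m = "length t" and ?b = "remdups_adj (act \<tau> t)"
  have "t \<in> thick N"
    using t by (simp add: tops_def fresh_def)
  then have fresh: "?b \<in> fresh N"
    using remdups_adj_in_fresh act_in_thick \<tau> not_base by blast
  have "sorted \<tau>"
    using \<tau> by (simp add: simp_op_def)
  have "t \<noteq> []"
    using j(1) by auto
  then have set_\<tau>: "set \<tau> \<subseteq> {0..<?m} - {j}"
    using simp_op_less_length[OF \<tau>] j(3) by auto
  then have card_\<tau>: "card (set \<tau>) \<le> ?m - 1"
    using card_mono[OF _ set_\<tau>] j(1) by simp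
  have "length ?b \<le> length (remdups_adj \<tau>)"
    using remdups_adj_act[of \<tau> t] remdups_adj_length[of "act (remdups_adj \<tau>) t"] by simp
  also have "\<dots> = card (set \<tau>)"
    using distinct_card[OF distinct_remdups_adj_sorted[OF \<open>sorted \<tau>\<close>]] by simp
  finally have len_b: "length ?b \<le> card (set \<tau>)" .
  show ?thesis
  proof (cases "length ?b < ?m - 1")
    case True
    then have "length (top_of ?b) < ?m"
      using length_top_of_le[OF fresh] by linarith
    then show ?thesis
      by (simp add: top_key_def)
  next
    case False
    then have "card (set \<tau>) = card ({0..<?m} - {j})"
      using len_b card_\<tau> j(1) by simp
    then have "set \<tau> = {0..<?m} - {j}"
      using card_subset_eq[OF _ set_\<tau>] by blast
    then have filter: "remdups_adj \<tau> = filter (\<lambda>i. i \<noteq> j) [0..<?m]"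
      using remdups_adj_sorted_filter_upt[OF \<open>sorted \<tau>\<close>] by simp
    have "?b = remdups_adj (act (remdups_adj \<tau>) t)"
      by (rule remdups_adj_act)
    also have "\<dots> = remdups_adj (remove_nth j t)"
      unfolding filter act_filter_upt_length[OF j(1)] ..
    finally have b: "?b = remdups_adj (remove_nth j t)" .
    then have "length (remdups_adj (remove_nth j t)) = length (remove_nth j t)"
      using False len_b card_\<tau> j(1) remdups_adj_length[of "remove_nth j t"] by simp
    then have "?b = remove_nth j t"
      using b by (metis distinct_adj_conv_length_remdups_adj distinct_adj_altdef)
    then show ?thesis
      using top_key_face_less[OF t j(1,2)] fresh by simp
  qed
qed

text \<open>The operators missing no vertex other than the pivot are exactly those outside the
  horn, see std_minus_horn_cover.\<close>

lemma remdups_adj_act_cover: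
  assumes t: "t \<in> tops N" and \<tau>: "simp_op \<tau> (length t - 1)"
    and cover: "{0..<length t} - {pivot t} \<subseteq> set \<tau>"
  shows "remdups_adj (act \<tau> t) = t \<or> remdups_adj (act \<tau> t) = remove_nth (pivot t) t"
proof -
  let ?m = "length t" and ?k = "pivot t"
  have k: "?k < ?m"
    using top_pivot_less_next(1)[OF t] by simp
  have "sorted \<tau>"
    using \<tau> by (simp add: simp_op_def)
  have sub: "set \<tau> \<subseteq> {0..<?m}"
    using simp_op_less_length[OF \<tau>] k by fastforce
  have "distinct_adj t" "distinct_adj (remove_nth ?k t)"
    using t remove_top_in_fresh[OF t] by (simp_all add: tops_def mem_fresh_iff)
  show ?thesis
  proof (cases "?k \<in> set \<tau>")
    case True
    with sub cover have "set \<tau> = {0..<?m}"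
      by blast
    then have "remdups_adj \<tau> = [0..<?m]"
      using remdups_adj_sorted_upt[OF \<open>sorted \<tau>\<close>] by simp
    then have "remdups_adj (act \<tau> t) = remdups_adj t"
      using remdups_adj_act[of \<tau> t] act_upt_length[of t] by simp
    with \<open>distinct_adj t\<close> show ?thesis
      by (simp add: distinct_adj_altdef)
  next
    case False
    with sub cover have "set \<tau> = {0..<?m} - {?k}"
      by blast
    then have "remdups_adj \<tau> = filter (\<lambda>i. i \<noteq> ?k) [0..<?m]"
      using remdups_adj_sorted_filter_upt[OF \<open>sorted \<tau>\<close>] by simp
    then have "remdups_adj (act \<tau> t) = remdups_adj (remove_nth ?k t)"
      using remdups_adj_act[of \<tau> t] act_filter_upt_length[OF k] by simp
    with \<open>distinct_adj (remove_nth ?k t)\<close> show ?thesis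
      by (simp add: distinct_adj_altdef)
  qed
qed

lemma act_cover_not_in_base:
  assumes "t \<in> tops N" "simp_op \<tau> (length t - 1)" "{0..<length t} - {pivot t} \<subseteq> set \<tau>"
  shows "act \<tau> t \<notin> base N"
proof -
  have "remdups_adj (act \<tau> t) \<in> fresh N"
    using remdups_adj_act_cover[OF assms] remove_top_in_fresh[OF assms(1)] assms(1)
    by (auto simp: tops_def)
  then show ?thesis
    by (simp add: fresh_def)
qed

lemma top_of_act_cover:
  assumes "t \<in> tops N" "simp_op \<tau> (length t - 1)" "{0..<length t} - {pivot t} \<subseteq> set \<tau>"
  shows "top_of (remdups_adj (act \<tau> t)) = t"
  using remdups_adj_act_cover[OF assms] top_of_top[OF assms(1)] top_of_remove_top[OF assms(1)]
  by auto

lemma std_minus_horn_cover: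
  assumes "t \<in> tops N" "\<tau> \<in> std (length t - 1) - horn (length t - 1) (pivot t)"
  shows "simp_op \<tau> (length t - 1)" "{0..<length t} - {pivot t} \<subseteq> set \<tau>"
proof -
  show "simp_op \<tau> (length t - 1)"
    using assms(2) by (simp add: std_eq_simp_op)
  show "{0..<length t} - {pivot t} \<subseteq> set \<tau>"
  proof
    fix x assume "x \<in> {0..<length t} - {pivot t}"
    then have "x \<le> length t - 1" "x \<noteq> pivot t"
      by auto
    with assms(2) show "x \<in> set \<tau>"
      by (auto simp: mem_horn_iff std_eq_simp_op)
  qed
qed

lemma top_nth_ne_nearby:
  assumes t: "t \<in> tops N" and b: "b < length t" "b = Suc a \<or> b = Suc (Suc a) \<and> pivot t = Suc a"
  shows "t ! a \<noteq> t ! b"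
  using b(2)
proof
  assume "b = Suc a"
  moreover have "distinct_adj t"
    using t by (simp add: tops_def mem_fresh_iff)
  ultimately show ?thesis
    using b(1) distinct_adj_nth by blast
next
  assume "b = Suc (Suc a) \<and> pivot t = Suc a"
  then show ?thesis
    using nth_below_pivot[of a t] top_pivot_less_next(2)[OF t] by simp
qed

lemma top_nth_inj_nearby:
  assumes t: "t \<in> tops N" and "x < length t" "y < length t" "t ! x = t ! y"
    and "x \<in> {a, Suc a} \<or> x = Suc (Suc a) \<and> pivot t = Suc a"
    and "y \<in> {a, Suc a} \<or> y = Suc (Suc a) \<and> pivot t = Suc a"
  shows "x = y"
  using assms top_nth_ne_nearby[OF t, of x a] top_nth_ne_nearby[OF t, of y a]
    top_nth_ne_nearby[OF t, of x "Suc a"] top_nth_ne_nearby[OF t, of y "Suc a"]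
  by auto

lemma sorted_cover_first:
  assumes "sorted \<tau>" "\<tau> \<noteq> []" "set \<tau> \<subseteq> {0..<m}" "{0..<m} - {k} \<subseteq> set \<tau>"
  shows "\<tau> ! 0 = 0 \<or> \<tau> ! 0 = Suc 0 \<and> k = 0"
proof -
  have "\<tau> ! 0 < m"
    using assms(2,3) nth_mem[of 0 \<tau>] atLeastLessThan_iff by blast
  have gap: "c = k" if "c < \<tau> ! 0" for c
  proof (rule ccontr)
    assume "c \<noteq> k"
    with that \<open>\<tau> ! 0 < m\<close> assms(4) have "c \<in> set \<tau>"
      by auto
    then obtain i where "i < length \<tau>" "\<tau> ! i = c"
      by (auto simp: in_set_conv_nth)
    then show False
      using that sorted_nth_mono[OF assms(1), of 0 i] by simp
  qed
  show ?thesis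
    using gap[of 0] gap[of 1] by (cases "\<tau> ! 0") auto
qed

lemma sorted_cover_next:
  assumes "sorted \<tau>" "Suc i < length \<tau>" "set \<tau> \<subseteq> {0..<m}" "{0..<m} - {k} \<subseteq> set \<tau>"
  shows "\<tau> ! Suc i \<in> {\<tau> ! i, Suc (\<tau> ! i)} \<or> \<tau> ! Suc i = Suc (Suc (\<tau> ! i)) \<and> k = Suc (\<tau> ! i)"
proof -
  have "\<tau> ! Suc i < m"
    using assms(3) nth_mem[OF assms(2)] atLeastLessThan_iff by blast
  have gap: "c = k" if "\<tau> ! i < c" "c < \<tau> ! Suc i" for c
  proof (rule ccontr)
    assume "c \<noteq> k"
    with that \<open>\<tau> ! Suc i < m\<close> assms(4) have "c \<in> set \<tau>"
      by auto
    then obtain r where r: "r < length \<tau>" "\<tau> ! r = c"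
      by (auto simp: in_set_conv_nth)
    show False
    proof (cases "r \<le> i")
      case True
      then show False
        using that r sorted_nth_mono[OF assms(1) True] assms(2) by simp
    next
      case False
      then show False
        using that r sorted_nth_mono[OF assms(1), of "Suc i" r] by simp
    qed
  qed
  have "\<tau> ! i \<le> \<tau> ! Suc i"
    using sorted_nth_mono[OF assms(1), of i "Suc i"] assms(2) by simp
  then consider "\<tau> ! Suc i = \<tau> ! i \<or> \<tau> ! Suc i = Suc (\<tau> ! i)"
    | "\<tau> ! Suc i = Suc (Suc (\<tau> ! i))" | "Suc (Suc (\<tau> ! i)) < \<tau> ! Suc i"
    by linarith
  then show ?thesis
  proof cases
    case 2
    then show ?thesis
      using gap[of "Suc (\<tau> ! i)"] by simp
  next
    case 3
    then show ?thesis
      using gap[of "Suc (\<tau> ! i)"] gap[of "Suc (Suc (\<tau> ! i))"] by simp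
  qed auto
qed

lemma act_top_inj_on_cover:
  assumes t: "t \<in> tops N"
    and \<tau>: "simp_op \<tau> (length t - 1)" "{0..<length t} - {pivot t} \<subseteq> set \<tau>"
    and \<tau>': "simp_op \<tau>' (length t - 1)" "{0..<length t} - {pivot t} \<subseteq> set \<tau>'"
    and eq: "act \<tau> t = act \<tau>' t"
  shows "\<tau> = \<tau>'"
proof -
  let ?m = "length t"
  have "t \<noteq> []"
    using top_pivot_less_next(1)[OF t] by auto
  have op: "sorted \<sigma>" "\<sigma> \<noteq> []" "set \<sigma> \<subseteq> {0..<?m}" if "simp_op \<sigma> (?m - 1)" for \<sigma>
    using that simp_op_less_length[OF that \<open>t \<noteq> []\<close>] by (auto simp: simp_op_def)
  have len: "length \<tau> = length \<tau>'"
    using arg_cong[OF eq, of length] by simp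
  have at: "\<tau> ! i < ?m" "\<tau>' ! i < ?m" "t ! (\<tau> ! i) = t ! (\<tau>' ! i)" if "i < length \<tau>" for i
  proof -
    have "\<tau> ! i \<in> set \<tau>" "\<tau>' ! i \<in> set \<tau>'"
      using that len by simp_all
    then show "\<tau> ! i < ?m" "\<tau>' ! i < ?m"
      using op(3)[OF \<tau>(1)] op(3)[OF \<tau>'(1)] by auto
    show "t ! (\<tau> ! i) = t ! (\<tau>' ! i)"
      using that len arg_cong[OF eq, of "\<lambda>s. s ! i"] by simp
  qed
  have "\<tau> ! i = \<tau>' ! i" if "i < length \<tau>" for i
    using that
  proof (induction i)
    case 0
    then show ?case
      using sorted_cover_first[OF op[OF \<tau>(1)] \<tau>(2)] sorted_cover_first[OF op[OF \<tau>'(1)] \<tau>'(2)]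
        top_nth_inj_nearby[OF t at[OF "0.prems"], of 0] by auto
  next
    case (Suc i)
    then have "\<tau> ! i = \<tau>' ! i"
      by simp
    then show ?case
      using sorted_cover_next[OF op(1)[OF \<tau>(1)] Suc.prems op(3)[OF \<tau>(1)] \<tau>(2)]
        sorted_cover_next[OF op(1)[OF \<tau>'(1)] _ op(3)[OF \<tau>'(1)] \<tau>'(2), of i] Suc.prems len
        top_nth_inj_nearby[OF t at[OF Suc.prems], of "\<tau> ! i"]
      by auto
  qed
  with len show ?thesis
    by (simp add: nth_equalityI)
qed

section \<open>The filtration\<close>

definition rank_in :: "'a set \<Rightarrow> ('a \<Rightarrow> 'b::linorder) \<Rightarrow> 'a \<Rightarrow> nat" where
  "rank_in A f a = card {u \<in> A. f u < f a}"

lemma rank_in_less: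
  assumes "finite {u \<in> A. f u < f a}" "u \<in> A" "f u < f a"
  shows "rank_in A f u < rank_in A f a"
  unfolding rank_in_def
proof (rule psubset_card_mono[OF assms(1)])
  show "{w \<in> A. f w < f u} \<subset> {w \<in> A. f w < f a}"
    using assms(2,3) by auto
qed

lemma rank_in_le_imp_le:
  assumes "\<And>a. finite {u \<in> A. f u < f a}" "u \<in> A" "a \<in> A" "rank_in A f u \<le> rank_in A f a"
  shows "f u \<le> f a"
proof (rule ccontr)
  assume "\<not> f u \<le> f a"
  then have "rank_in A f a < rank_in A f u"
    using rank_in_less[OF assms(1) assms(3)] by simp
  with assms(4) show False
    by simp
qed

lemma rank_in_inj:
  assumes "\<And>a. finite {u \<in> A. f u < f a}" "inj_on f A" "u \<in> A" "a \<in> A"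
    and "rank_in A f u = rank_in A f a"
  shows "u = a"
  using rank_in_le_imp_le[of A f u a] rank_in_le_imp_le[of A f a u] assms
  by (simp add: inj_on_eq_iff order_antisym)

lemma rank_in_downward_closed:
  assumes fin: "\<And>a. finite {u \<in> A. f u < f a}" and inj: "inj_on f A"
    and "a \<in> A" "r < rank_in A f a"
  shows "r \<in> rank_in A f ` A"
proof -
  let ?B = "{u \<in> A. f u < f a}"
  have card_B: "card ?B = rank_in A f a"
    by (simp add: rank_in_def)
  have "rank_in A f ` ?B \<subseteq> {..<card ?B}"
    unfolding card_B using rank_in_less[OF fin] by auto
  moreover have "inj_on (rank_in A f) ?B"
    using rank_in_inj[OF fin inj] by (auto intro: inj_onI)
  then have "card (rank_in A f ` ?B) = card {..<card ?B}"
    by (simp add: card_image)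
  ultimately have "rank_in A f ` ?B = {..<card ?B}"
    by (simp add: card_subset_eq)
  then show ?thesis
    using assms(4) unfolding card_B by auto
qed

abbreviation top_rank :: "nat \<Rightarrow> nat list \<Rightarrow> nat" where
  "top_rank N \<equiv> rank_in (tops N) (top_key N)"

lemma finite_top_key_less: "finite {u \<in> tops N. top_key N u < top_key N t}"
proof (rule finite_subset)
  show "{u \<in> tops N. top_key N u < top_key N t} \<subseteq> {xs. set xs \<subseteq> {0..N} \<and> length xs \<le> length t}"
    by (auto simp: top_key_def tops_def fresh_def thick_def)
  show "finite {xs. set xs \<subseteq> {0..N} \<and> length xs \<le> length t}"
    by (rule finite_lists_length_le) simp
qed

lemma inj_on_top_key: "inj_on (top_key N) A"
  by (simp add: inj_on_def top_key_def)

lemmas top_rank_less = rank_in_less[OF finite_top_key_less]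

lemmas top_rank_inj = rank_in_inj[OF finite_top_key_less inj_on_top_key]

lemma top_rank_image_downward_closed:
  "l \<in> top_rank N ` tops N \<Longrightarrow> l' < l \<Longrightarrow> l' \<in> top_rank N ` tops N"
  using rank_in_downward_closed[OF finite_top_key_less inj_on_top_key] by blast

lemma length_le_if_top_rank_le:
  assumes "t \<in> tops N" "u \<in> tops N" "top_rank N t \<le> top_rank N u"
  shows "length t \<le> length u"
proof -
  have "top_key N t \<le> top_key N u"
    using rank_in_le_imp_le[OF finite_top_key_less assms] .
  then show ?thesis
    by (auto simp: top_key_def)
qed

text \<open>Stage l consists of the base together with every simplex whose nondegenerate
  part belongs to one of the first l tops, i.e. is such a top or its missing face.\<close>

definition filtration :: "nat \<Rightarrow> nat \<Rightarrow> nat list set" where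
  "filtration N l = base N \<union> {\<sigma> \<in> thick N. \<sigma> \<notin> base N \<and> top_rank N (top_of (remdups_adj \<sigma>)) < l}"

lemma filtration_0: "filtration N 0 = base N"
  by (simp add: filtration_def)

lemma filtration_mono: "l \<le> l' \<Longrightarrow> filtration N l \<subseteq> filtration N l'"
  by (auto simp: filtration_def)

lemma UN_filtration: "(\<Union>l. filtration N l) = thick N"
proof
  show "(\<Union>l. filtration N l) \<subseteq> thick N"
    using base_subset_thick by (auto simp: filtration_def)
  show "thick N \<subseteq> (\<Union>l. filtration N l)"
  proof
    fix \<sigma> assume "\<sigma> \<in> thick N"
    then have "\<sigma> \<in> filtration N (Suc (top_rank N (top_of (remdups_adj \<sigma>))))"
      by (simp add: filtration_def)
    then show "\<sigma> \<in> (\<Union>l. filtration N l)"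
      by blast
  qed
qed

lemma filtration_Suc_eq:
  assumes "l \<notin> top_rank N ` tops N"
  shows "filtration N (Suc l) = filtration N l"
proof -
  have "top_rank N (top_of (remdups_adj \<sigma>)) \<noteq> l" if "\<sigma> \<in> thick N" "\<sigma> \<notin> base N" for \<sigma>
    using assms top_of_in_tops[OF remdups_adj_in_fresh[OF that]] by (metis image_eqI)
  then show ?thesis
    by (auto simp: filtration_def less_Suc_eq)
qed

lemma act_horn_in_filtration:
  assumes t: "t \<in> tops N" and \<tau>: "\<tau> \<in> horn (length t - 1) (pivot t)"
  shows "act \<tau> t \<in> filtration N (top_rank N t)"
proof (cases "act \<tau> t \<in> base N")
  case False
  obtain j where op: "simp_op \<tau> (length t - 1)" and j: "j \<le> length t - 1" "j \<noteq> pivot t" "j \<notin> set \<tau>"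
    using \<tau> by (auto simp: mem_horn_iff)
  moreover have "j < length t"
    using j(1) top_pivot_less_next(1)[OF t] by linarith
  have "t \<in> thick N"
    using t by (simp add: tops_def fresh_def)
  then have "act \<tau> t \<in> thick N" "remdups_adj (act \<tau> t) \<in> fresh N"
    using act_in_thick[OF _ op] remdups_adj_in_fresh False by auto
  then show ?thesis
    using False top_rank_less[OF top_of_in_tops top_key_horn_less[OF t op \<open>j < length t\<close> j(2,3) False]]
    by (simp add: filtration_def)
qed (simp add: filtration_def)

lemma act_cover_in_filtration_Suc:
  assumes t: "t \<in> tops N" and \<tau>: "simp_op \<tau> (length t - 1)"
    and cover: "{0..<length t} - {pivot t} \<subseteq> set \<tau>"
  shows "act \<tau> t \<in> filtration N (Suc (top_rank N t))" "act \<tau> t \<notin> filtration N (top_rank N t)"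
proof -
  have "t \<in> thick N"
    using t by (simp add: tops_def fresh_def)
  then show "act \<tau> t \<in> filtration N (Suc (top_rank N t))" "act \<tau> t \<notin> filtration N (top_rank N t)"
    using act_in_thick[OF _ \<tau>] act_cover_not_in_base[OF assms] top_of_act_cover[OF assms]
    by (simp_all add: filtration_def)
qed

lemma act_in_filtration_Suc:
  assumes t: "t \<in> tops N" and \<tau>: "simp_op \<tau> (length t - 1)"
  shows "act \<tau> t \<in> filtration N (Suc (top_rank N t))"
proof (cases "\<tau> \<in> horn (length t - 1) (pivot t)")
  case True
  then show ?thesis
    using act_horn_in_filtration[OF t] filtration_mono[of "top_rank N t" "Suc (top_rank N t)"] by auto
next
  case False
  with \<tau> have "\<tau> \<in> std (length t - 1) - horn (length t - 1) (pivot t)"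
    by (simp add: std_eq_simp_op)
  then show ?thesis
    using act_cover_in_filtration_Suc(1)[OF t std_minus_horn_cover[OF t]] by simp
qed

lemma filtration_Suc_subset_image:
  assumes t: "t \<in> tops N" and \<sigma>: "\<sigma> \<in> filtration N (Suc (top_rank N t))" "\<sigma> \<notin> filtration N (top_rank N t)"
  shows "\<sigma> \<in> (\<lambda>\<tau>. act \<tau> t) ` std (length t - 1)"
proof -
  let ?k = "pivot t" and ?b = "remdups_adj \<sigma>"
  have "\<sigma> \<in> thick N" "\<sigma> \<notin> base N" and rank: "top_rank N (top_of ?b) = top_rank N t"
    using \<sigma> by (auto simp: filtration_def)
  then have b: "?b \<in> fresh N"
    using remdups_adj_in_fresh by blast
  then have "top_of ?b = t"
    using top_rank_inj[OF _ _ rank] top_of_in_tops t by blast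
  then have "?b = t \<or> ?b = remove_nth ?k t"
    using top_of_eqD[OF b] by simp
  moreover have "Suc ?k < length t"
    using top_pivot_less_next(1)[OF t] .
  ultimately obtain \<iota> where \<iota>: "simp_op \<iota> (length t - 1)" "act \<iota> t = ?b"
    using simp_op_upt[of "length t"] act_upt_length[of t]
      simp_op_filter_upt[of "length t" ?k] act_filter_upt_length[of ?k t]
    by fastforce
  have "\<sigma> \<noteq> []"
    using \<open>\<sigma> \<in> thick N\<close> by (simp add: thick_def)
  then obtain \<theta> where \<theta>: "simp_op \<theta> (length ?b - 1)" "act \<theta> ?b = \<sigma>"
    using remdups_adj_degeneracy by blast
  have "\<iota> \<noteq> []" "length \<iota> = length ?b"
    using \<iota>(1) arg_cong[OF \<iota>(2), of length] by (auto simp: simp_op_def)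
  then have "\<sigma> = act (act \<theta> \<iota>) t"
    using \<theta> \<iota> act_act[of \<theta> \<iota> t] by simp
  moreover have "act \<theta> \<iota> \<in> std (length t - 1)"
    using simp_op_act[OF \<iota>(1)] \<theta>(1) \<open>length \<iota> = length ?b\<close> by (simp add: std_eq_simp_op)
  ultimately show ?thesis
    by blast
qed

lemma pushout_step_filtration:
  assumes t: "t \<in> tops N"
  shows "pushout_step (filtration N (top_rank N t)) (filtration N (Suc (top_rank N t)))
    (length t - 1) (pivot t) (\<lambda>\<tau>. act \<tau> t)"
  unfolding pushout_step_def
proof (intro conjI)
  let ?P = "filtration N (top_rank N t)" and ?Q = "filtration N (Suc (top_rank N t))"
    and ?x = "\<lambda>\<tau>. act \<tau> t" and ?p = "length t - 1"
  show "simp_map (std ?p) ?Q ?x"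
    unfolding simp_map_def
  proof (intro ballI conjI allI impI)
    fix \<tau> assume "\<tau> \<in> std ?p"
    then have \<tau>: "simp_op \<tau> ?p"
      by (simp add: std_eq_simp_op)
    then show "act \<tau> t \<in> ?Q"
      by (rule act_in_filtration_Suc[OF t])
    show "length (act \<tau> t) = length \<tau>"
      by simp
    fix \<theta> assume "simp_op \<theta> (length \<tau> - 1)"
    with \<tau> show "act (act \<theta> \<tau>) t = act \<theta> (act \<tau> t)"
      by (simp add: act_act simp_op_def)
  qed
  show "?x ` horn ?p (pivot t) \<subseteq> ?P"
    using act_horn_in_filtration[OF t] by blast
  show PQ: "?P \<subseteq> ?Q"
    by (rule filtration_mono) simp
  show "?Q = ?P \<union> ?x ` std ?p"
  proof
    show "?Q \<subseteq> ?P \<union> ?x ` std ?p"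
      using filtration_Suc_subset_image[OF t] by blast
    show "?P \<union> ?x ` std ?p \<subseteq> ?Q"
      using PQ act_in_filtration_Suc[OF t] by (auto simp: std_eq_simp_op)
  qed
  show "inj_on ?x (std ?p - horn ?p (pivot t))"
  proof (rule inj_onI)
    fix \<tau> \<tau>' assume "\<tau> \<in> std ?p - horn ?p (pivot t)" "\<tau>' \<in> std ?p - horn ?p (pivot t)"
      and "act \<tau> t = act \<tau>' t"
    then show "\<tau> = \<tau>'"
      using act_top_inj_on_cover[OF t std_minus_horn_cover[OF t] std_minus_horn_cover[OF t]] by blast
  qed
  have "act \<tau> t \<notin> ?P" if "\<tau> \<in> std ?p - horn ?p (pivot t)" for \<tau>
    using act_cover_in_filtration_Suc(2)[OF t std_minus_horn_cover[OF t that]] .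
  then show "?x ` (std ?p - horn ?p (pivot t)) \<inter> ?P = {}"
    by blast
qed

lemma expansionI:
  assumes "simp_subset S" "simp_subset T" "S \<subseteq> T" "F 0 = S"
    and "\<And>l l'. l \<in> K \<Longrightarrow> l' < l \<Longrightarrow> l' \<in> K"
    and "\<And>l. l \<in> K \<Longrightarrow> 1 \<le> m l \<and> i l \<le> m l \<and> pushout_step (F l) (F (Suc l)) (m l) (i l) (x l)"
    and "\<And>l. l \<notin> K \<Longrightarrow> F (Suc l) = F l"
    and "\<And>l l'. l \<le> l' \<Longrightarrow> l' \<in> K \<Longrightarrow> m l \<le> m l'"
    and "T = (\<Union>l. F l)"
  shows "expansion S T"
  unfolding expansion_def
  by (intro conjI assms(1-3), rule exI[of _ F], rule exI[of _ K], rule exI[of _ m], rule exI[of _ i],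
      rule exI[of _ x]) (use assms(4-) in blast)

theorem lemma7p4:
  fixes n :: nat
  shows "expansion (thick_bd n \<union> std n) (thick n)"
proof -
  let ?K = "top_rank n ` tops n"
  define top where "top = inv_into (tops n) (top_rank n)"
  have top: "top l \<in> tops n" "top_rank n (top l) = l" if "l \<in> ?K" for l
    using that by (auto simp: top_def inv_into_into f_inv_into_f)
  have step: "1 \<le> length (top l) - 1 \<and> pivot (top l) \<le> length (top l) - 1 \<and>
      pushout_step (filtration n l) (filtration n (Suc l)) (length (top l) - 1) (pivot (top l))
        (\<lambda>\<tau>. act \<tau> (top l))" if "l \<in> ?K" for l
  proof -
    have "Suc (pivot (top l)) < length (top l)"
      using top_pivot_less_next(1)[OF top(1)[OF that]] .
    then have "1 \<le> length (top l) - 1" "pivot (top l) \<le> length (top l) - 1"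
      by linarith+
    with pushout_step_filtration[OF top(1)[OF that]] show ?thesis
      unfolding top(2)[OF that] by blast
  qed
  have dim_mono: "length (top l) - 1 \<le> length (top l') - 1" if "l \<le> l'" "l' \<in> ?K" for l l'
  proof -
    have "l \<in> ?K"
      using that top_rank_image_downward_closed by (cases "l = l'") auto
    then show ?thesis
      using length_le_if_top_rank_le[OF top(1)[OF \<open>l \<in> ?K\<close>] top(1)[OF that(2)]]
        top(2)[OF \<open>l \<in> ?K\<close>] top(2)[OF that(2)] that(1) by (simp add: diff_le_mono)
  qed
  show ?thesis
    unfolding base_def[symmetric]
    by (rule expansionI[where F = "filtration n" and K = ?K and m = "\<lambda>l. length (top l) - 1"
          and i = "\<lambda>l. pivot (top l)" and x = "\<lambda>l \<tau>. act \<tau> (top l)"])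
      (fact simp_subset_base simp_subset_thick base_subset_thick filtration_0
        top_rank_image_downward_closed step filtration_Suc_eq dim_mono UN_filtration[symmetric])+
qed

end
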